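(* Let $(\Omega,T)$ be a minimal subshift over a finite alphabet $A$ such that no word in $L_5(\Omega)$ has repeated letters. Let $w=w_0\cdots w_{n-1}\in A^n$ with $n\geq4$. Then $w\in L(\Omega)$ if and only if $$\sigma_{[.w_0w_1]}\ast\Big(\sigma_{[.w_1w_2]}\ast\cdots\ast\big(\sigma_{[.w_{n-4}w_{n-3}]}\ast\sigma_{[w_{n-3}.w_{n-2}w_{n-1}]}\big)\cdots\Big)\neq 1\ \text{ in } G_T'.$$
   Context: $T$ is the left shift $(T\omega)_m=\omega_{m+1}$ on $A^{\mathbb Z}$; a minimal subshift is a closed shift-invariant $\Omega\subseteq A^{\mathbb Z}$ with every orbit dense. Words are indexed from $0$; $L_m(\Omega)$ is the set of words of length $m$ occurring in sequences of $\Omega$, $L(\Omega)=\bigcup_mL_m(\Omega)$. For words $u,v$ over $A$ (either may be empty), $[u.v]=\{\omega\in\Omega:\omega_{-i}=u_{|u|-i}\ (1\leq i\leq|u|),\ \omega_i=v_i\ (0\leq i\leq|v|-1)\}$ (possibly empty). For a clopen $U$ with $U,TU,T^2U$ pairwise disjoint, $\sigma_U(\omega)=T\omega$ on $U\cup TU$, $\sigma_U(\omega)=T^{-2}\omega$ on $T^2U$, $\sigma_U(\omega)=\omega$ elsewhere; $\sigma_\emptyset=1$. $G_T$ is the group of homeomorphisms $S$ of $\Omega$ with $S(x)=T^{f_S(x)}x$ for a continuous $f_S:\Omega\to\mathbb Z$; $G_T'$ its commutator subgroup. For group elements $r,s$, $r\ast s:=s\,r^{-1}s^{-1}r$. *)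

theory Defs
  imports "HOL-Analysis.Analysis"
begin

definition shift_top :: "(int \<Rightarrow> 'a) topology" where
  "shift_top = product_topology (\<lambda>_. discrete_topology UNIV) UNIV"

definition shift :: "(int \<Rightarrow> 'a) \<Rightarrow> (int \<Rightarrow> 'a)" where
  "shift \<omega> = (\<lambda>m. \<omega> (m + 1))"

definition shiftn :: "int \<Rightarrow> (int \<Rightarrow> 'a) \<Rightarrow> (int \<Rightarrow> 'a)" where
  "shiftn k \<omega> = (\<lambda>m. \<omega> (m + k))"

definition minimal_subshift :: "(int \<Rightarrow> 'a) set \<Rightarrow> bool" where
  "minimal_subshift \<Omega> \<longleftrightarrow>
     closedin shift_top \<Omega> \<and> shift ` \<Omega> = \<Omega> \<and>
     (\<forall>\<omega>\<in>\<Omega>. shift_top closure_of (range (\<lambda>k::int. shiftn k \<omega>)) = \<Omega>)"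

definition lang :: "(int \<Rightarrow> 'a) set \<Rightarrow> 'a list set" where
  "lang \<Omega> = {w. \<exists>\<omega>\<in>\<Omega>. \<exists>k::int. \<forall>i<length w. \<omega> (k + int i) = w ! i}"

definition cyl :: "(int \<Rightarrow> 'a) set \<Rightarrow> 'a list \<Rightarrow> 'a list \<Rightarrow> (int \<Rightarrow> 'a) set" where
  "cyl \<Omega> u v = {\<omega>\<in>\<Omega>.
     (\<forall>i. 1 \<le> i \<and> i \<le> length u \<longrightarrow> \<omega> (- int i) = u ! (length u - i)) \<and>
     (\<forall>i<length v. \<omega> (int i) = v ! i)}"

definition sigma :: "(int \<Rightarrow> 'a) set \<Rightarrow> (int \<Rightarrow> 'a) \<Rightarrow> (int \<Rightarrow> 'a)" where
  "sigma U \<omega> = (if \<omega> \<in> U \<union> shift ` U then shift \<omega>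
                else if \<omega> \<in> shift ` shift ` U then shiftn (-2) \<omega> else \<omega>)"

text \<open>\<open>r \<ast> s = s r\<^sup>-\<^sup>1 s\<^sup>-\<^sup>1 r\<close> in the group of homeomorphisms of \<open>\<Omega>\<close>
  (composition = function composition, \<open>r\<close> applied first; maps are taken as
  the identity outside \<open>\<Omega>\<close>).\<close>
definition gstar :: "(int \<Rightarrow> 'a) set \<Rightarrow> ((int \<Rightarrow> 'a) \<Rightarrow> (int \<Rightarrow> 'a))
     \<Rightarrow> ((int \<Rightarrow> 'a) \<Rightarrow> (int \<Rightarrow> 'a)) \<Rightarrow> ((int \<Rightarrow> 'a) \<Rightarrow> (int \<Rightarrow> 'a))" where
  "gstar \<Omega> r s = (\<lambda>x. if x \<in> \<Omega> then s (inv_into \<Omega> r (inv_into \<Omega> s (r x))) else x)"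

definition nested_comm :: "(int \<Rightarrow> 'a) set \<Rightarrow> 'a list \<Rightarrow> ((int \<Rightarrow> 'a) \<Rightarrow> (int \<Rightarrow> 'a))" where
  "nested_comm \<Omega> w =
     (let n = length w in
      foldr (\<lambda>i acc. gstar \<Omega> (sigma (cyl \<Omega> [] [w ! i, w ! (i + 1)])) acc)
            [0..<n - 3]
            (sigma (cyl \<Omega> [w ! (n - 3)] [w ! (n - 2), w ! (n - 1)])))"

end

theory Submission
  imports Defs
begin

text \<open>On the orbit of a point \<open>x\<close>, \<open>\<sigma>_U\<close> acts on the time coordinate \<open>k\<close> of \<open>T^k x\<close>
as the permutation of \<open>\<int>\<close> that rotates every block \<open>{j, j+1, j+2}\<close> with \<open>T^j x \<in> U\<close>,
so commutators of such maps can be computed on \<open>\<int>\<close>. Visits to \<open>[.ab]\<close> and (two steps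
later) to \<open>[b.v]\<close> both mark an occurrence of \<open>b\<close>; as no letter repeats within five places,
they are five apart unless they combine into a visit to \<open>[a.bv]\<close>, and a finite check of the
local configurations gives \<open>\<sigma>_[.ab] \<ast> \<sigma>_[b.v] = \<sigma>_[a.bv]\<close>. Telescoping, the nested
commutator is \<open>\<sigma>_V\<close> with \<open>V = [w_0.w_1\<cdots>w_{n-1}]\<close>. Since \<open>T\<close> has no fixed points,
\<open>\<sigma>_V \<noteq> 1\<close> iff \<open>V \<noteq> \<emptyset>\<close>, i.e. iff \<open>w \<in> L(\<Omega>)\<close>.\<close>

definition block_rot :: "(int \<Rightarrow> bool) \<Rightarrow> int \<Rightarrow> int" where
  "block_rot P k = (if P k \<or> P (k - 1) then k + 1 else if P (k - 2) then k - 2 else k)"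

definition separated :: "int \<Rightarrow> (int \<Rightarrow> bool) \<Rightarrow> bool" where
  "separated d P \<longleftrightarrow> (\<forall>i j. P i \<longrightarrow> P j \<longrightarrow> i \<noteq> j \<longrightarrow> d \<le> \<bar>i - j\<bar>)"

lemma separated_mono: "separated d P \<Longrightarrow> d' \<le> d \<Longrightarrow> separated d' P"
  unfolding separated_def by force

lemma separated_translate:
  assumes "separated d P"
  shows "separated d (\<lambda>j. P (i + j))"
  using assms unfolding separated_def
  by (metis add_diff_cancel_left add_left_cancel)

lemma separated_near:
  assumes "separated d P" "P i" "\<bar>j - i\<bar> < d"
  shows "P j \<longleftrightarrow> j = i"
  using assms unfolding separated_def by fastforce

lemma block_rot_translate: "block_rot P (i + k) = i + block_rot (\<lambda>j. P (i + j)) k"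
  by (simp add: block_rot_def algebra_simps)

lemma block_rot_cube_0:
  assumes "separated 3 P"
  shows "block_rot P (block_rot P (block_rot P 0)) = 0"
proof -
  consider (hit) c where "P c" "c \<in> {-2..0}" | (miss) "\<not> P 0" "\<not> P (-1)" "\<not> P (-2)"
    by force
  then show ?thesis
  proof cases
    case hit
    then have "c = 0 \<or> c = -1 \<or> c = -2" by auto
    then show ?thesis using separated_near[OF assms hit(1)]
      by (elim disjE) (simp_all add: block_rot_def)
  qed (simp add: block_rot_def)
qed

lemma block_rot_cube:
  assumes "separated 3 P"
  shows "block_rot P (block_rot P (block_rot P k)) = k"
  using block_rot_cube_0[OF separated_translate[OF assms, of k]] block_rot_translate[of P k]
  by (metis add.right_neutral)

lemma block_rot_commutator_local:
  assumes A: "\<And>j. \<bar>j\<bar> < 5 \<Longrightarrow> A j \<longleftrightarrow> j = 0 \<and> a"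
    and B: "\<And>j. \<bar>j - 2\<bar> < 5 \<Longrightarrow> B j \<longleftrightarrow> j = 2 \<and> b"
    and d: "d \<in> {0..4}"
  shows "block_rot B (block_rot A (block_rot A (block_rot B (block_rot B (block_rot A d)))))
       = block_rot (\<lambda>j. A (j - 1) \<and> B (j + 1)) d"
proof -
  have "d = 0 \<or> d = 1 \<or> d = 2 \<or> d = 3 \<or> d = 4" using d by auto
  then show ?thesis
    by (cases a; cases b; elim disjE) (simp_all add: block_rot_def A B)
qed

text \<open>Reading \<open>block_rot A\<close> as \<open>r\<close> and \<open>block_rot B\<close> as \<open>s\<close>, the left-hand side is
\<open>s r\<^sup>-\<^sup>1 s\<^sup>-\<^sup>1 r\<close> with \<open>r\<^sup>-\<^sup>1 = r\<^sup>2\<close> and \<open>s\<^sup>-\<^sup>1 = s\<^sup>2\<close>.\<close>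

lemma block_rot_commutator:
  assumes sep: "separated 5 (\<lambda>j. A j \<or> B (j + 2))"
  shows "block_rot B (block_rot A (block_rot A (block_rot B (block_rot B (block_rot A k)))))
       = block_rot (\<lambda>j. A (j - 1) \<and> B (j + 1)) k"
proof (cases "\<exists>i\<in>{k-4..k}. A i \<or> B (i + 2)")
  case True
  \<comment> \<open>translate a nearby visit \<open>i\<close> to \<open>0\<close>, where only finitely many configurations remain\<close>
  then obtain i where i: "i \<in> {k-4..k}" and hit: "A i \<or> B (i + 2)" by blast
  from i have d: "k - i \<in> {0..4}" by simp
  have near: "A (i + j) \<or> B (i + j + 2) \<longleftrightarrow> j = 0" if "\<bar>j\<bar> < 5" for j
    using separated_near[where P = "\<lambda>j. A j \<or> B (j + 2)", OF sep hit, of "i + j"] that by auto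
  have "block_rot (\<lambda>j. B (i + j)) (block_rot (\<lambda>j. A (i + j)) (block_rot (\<lambda>j. A (i + j))
          (block_rot (\<lambda>j. B (i + j)) (block_rot (\<lambda>j. B (i + j)) (block_rot (\<lambda>j. A (i + j)) (k - i))))))
      = block_rot (\<lambda>j. A (i + (j - 1)) \<and> B (i + (j + 1))) (k - i)"
  proof (rule block_rot_commutator_local[OF _ _ d])
    show "A (i + j) \<longleftrightarrow> j = 0 \<and> A (i + 0)" if "\<bar>j\<bar> < 5" for j
      using near[OF that] by auto
    show "B (i + j) \<longleftrightarrow> j = 2 \<and> B (i + 2)" if "\<bar>j - 2\<bar> < 5" for j
      using near[OF that] by (auto simp: algebra_simps)
  qed
  moreover have "block_rot P k = i + block_rot (\<lambda>j. P (i + j)) (k - i)" for P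
    using block_rot_translate[of P i "k - i"] by simp
  ultimately show ?thesis
    by (simp only: block_rot_translate add_diff_eq add.assoc)
next
  case False
  then have "\<forall>j. k - 4 \<le> j \<and> j \<le> k \<longrightarrow> \<not> A j \<and> \<not> B (j + 2)" by auto
  from this[rule_format, of k] this[rule_format, of "k - 1"] this[rule_format, of "k - 2"]
    this[rule_format, of "k - 3"] this[rule_format, of "k - 4"]
  show ?thesis
    by (simp add: block_rot_def)
qed

lemma shiftn_shiftn [simp]: "shiftn a (shiftn b x) = shiftn (a + b) x"
  by (simp add: shiftn_def algebra_simps)

lemma shift_shiftn [simp]: "shift (shiftn k x) = shiftn (k + 1) x"
  by (simp add: shift_def shiftn_def algebra_simps)

lemma shiftn_0 [simp]: "shiftn 0 x = x"
  by (simp add: shiftn_def)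

lemma inj_shift: "inj shift"
proof (rule injI)
  fix x y :: "int \<Rightarrow> 'a"
  have unshift: "shiftn (-1) (shift z) = z" for z :: "int \<Rightarrow> 'a"
    using shift_shiftn[of 0 z] by simp
  assume "shift x = shift y"
  then show "x = y" by (metis unshift)
qed

lemma shiftn_in_shift_image: "shiftn k x \<in> shift ` U \<longleftrightarrow> shiftn (k - 1) x \<in> U"
  using inj_image_mem_iff[OF inj_shift, of "shiftn (k - 1) x" U] by simp

lemma shiftn_closed:
  assumes inv: "shift ` \<Omega> = \<Omega>" and x: "x \<in> \<Omega>"
  shows "shiftn k x \<in> \<Omega>"
proof (induction k rule: int_induct[where k = 0])
  case base
  show ?case using x by simp
next
  case (step1 i)
  then have "shift (shiftn i x) \<in> \<Omega>" using inv by blast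
  then show ?case by simp
next
  case (step2 i)
  then show ?case using inv shiftn_in_shift_image[of i x \<Omega>] by simp
qed

definition visits :: "(int \<Rightarrow> 'a) set \<Rightarrow> (int \<Rightarrow> 'a) \<Rightarrow> int \<Rightarrow> bool" where
  "visits U x j \<longleftrightarrow> shiftn j x \<in> U"

lemma sigma_shiftn: "sigma U (shiftn k x) = shiftn (block_rot (visits U x) k) x"
  by (simp add: sigma_def block_rot_def visits_def shiftn_in_shift_image)

lemma sigma_closed: "shift ` \<Omega> = \<Omega> \<Longrightarrow> x \<in> \<Omega> \<Longrightarrow> sigma U x \<in> \<Omega>"
  using sigma_shiftn[of U 0 x] shiftn_closed by simp

lemma sigma_cube:
  assumes "separated 3 (visits U x)"
  shows "sigma U (sigma U (sigma U x)) = x"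
  using sigma_shiftn[of U 0 x] sigma_shiftn[of U _ x] block_rot_cube[OF assms, of 0] by simp

lemma inv_into_sigma:
  assumes inv: "shift ` \<Omega> = \<Omega>" and sep: "\<forall>z\<in>\<Omega>. separated 3 (visits U z)" and x: "x \<in> \<Omega>"
  shows "inv_into \<Omega> (sigma U) x = sigma U (sigma U x)"
proof (rule inv_into_f_eq)
  show "inj_on (sigma U) \<Omega>"
    by (rule inj_onI) (metis sep sigma_cube)
  show "sigma U (sigma U x) \<in> \<Omega>" using sigma_closed[OF inv] x by blast
  show "sigma U (sigma U (sigma U x)) = x" using sigma_cube sep x by blast
qed

lemma sigma_outside:
  assumes "shift ` \<Omega> = \<Omega>" "U \<subseteq> \<Omega>" "x \<notin> \<Omega>"
  shows "sigma U x = x"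
proof -
  have "shift ` U \<subseteq> \<Omega>" "shift ` shift ` U \<subseteq> \<Omega>" using assms(1,2) by blast+
  then show ?thesis using assms(2,3) by (auto simp: sigma_def)
qed

lemma letters_apart:
  assumes dist: "\<forall>u\<in>lang \<Omega>. length u = 5 \<longrightarrow> distinct u"
    and "x \<in> \<Omega>" "x p = x q" "\<bar>p - q\<bar> \<le> 4"
  shows "p = q"
proof -
  define s where "s = min p q"
  let ?u = "map (\<lambda>i. x (s + int i)) [0..<5]"
  have "?u \<in> lang \<Omega>" unfolding lang_def using assms(2) by auto
  then have "distinct ?u" using dist by simp
  define i j where "i = nat (p - s)" and "j = nat (q - s)"
  have "p = s + int i" "q = s + int j" "i < 5" "j < 5"
    using assms(4) by (auto simp: i_def j_def s_def)
  with assms(3) have "?u ! i = ?u ! j" by simp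
  with \<open>i < 5\<close> \<open>j < 5\<close> have "i = j"
    using nth_eq_iff_index_eq[OF \<open>distinct ?u\<close>, of i j] by simp
  with \<open>p = s + int i\<close> \<open>q = s + int j\<close> show ?thesis by simp
qed

lemma separated_at_letter:
  assumes dist: "\<forall>u\<in>lang \<Omega>. length u = 5 \<longrightarrow> distinct u"
    and "x \<in> \<Omega>" and letter: "\<And>j. P j \<Longrightarrow> x (j + c) = b"
  shows "separated 5 P"
  unfolding separated_def
proof (intro allI impI)
  fix i j assume "P i" "P j" "i \<noteq> j"
  then have "x (i + c) = x (j + c)" using letter by simp
  then have "\<not> \<bar>(i + c) - (j + c)\<bar> \<le> 4" using letters_apart[OF dist \<open>x \<in> \<Omega>\<close>] \<open>i \<noteq> j\<close> by force
  then show "5 \<le> \<bar>i - j\<bar>" by simp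
qed

lemma shift_no_fixpoint:
  assumes "\<forall>u\<in>lang \<Omega>. length u = 5 \<longrightarrow> distinct u" "x \<in> \<Omega>"
  shows "shift x \<noteq> x"
proof
  assume "shift x = x"
  then have "x 1 = x 0" by (metis shift_def add_0)
  then show False using letters_apart[OF assms, of 1 0] by simp
qed

lemma visits_cyl_pair:
  "visits (cyl \<Omega> [] [a, b]) x j \<longleftrightarrow> shiftn j x \<in> \<Omega> \<and> x j = a \<and> x (j + 1) = b"
  by (auto simp: visits_def cyl_def shiftn_def less_Suc_eq algebra_simps)

lemma visits_cyl:
  "visits (cyl \<Omega> [c] v) x j \<longleftrightarrow>
     shiftn j x \<in> \<Omega> \<and> x (j - 1) = c \<and> (\<forall>i<length v. x (j + int i) = v ! i)"
proof -
  have "(\<forall>i::nat. 1 \<le> i \<and> i \<le> 1 \<longrightarrow> Q i) \<longleftrightarrow> Q 1" for Q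
    by (metis le_antisym order_refl)
  then show ?thesis by (simp add: visits_def cyl_def shiftn_def algebra_simps)
qed

lemma gstar_sigma_cyl:
  assumes inv: "shift ` \<Omega> = \<Omega>" and dist: "\<forall>u\<in>lang \<Omega>. length u = 5 \<longrightarrow> distinct u"
  shows "gstar \<Omega> (sigma (cyl \<Omega> [] [a, b])) (sigma (cyl \<Omega> [b] v)) = sigma (cyl \<Omega> [a] (b # v))"
proof
  fix y
  let ?R = "cyl \<Omega> [] [a, b]" and ?S = "cyl \<Omega> [b] v"
  show "gstar \<Omega> (sigma ?R) (sigma ?S) y = sigma (cyl \<Omega> [a] (b # v)) y"
  proof (cases "y \<in> \<Omega>")
    case False
    have "cyl \<Omega> [a] (b # v) \<subseteq> \<Omega>" by (auto simp: cyl_def)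
    with False show ?thesis by (simp add: gstar_def sigma_outside[OF inv])
  next
    case True
    have in_\<Omega>: "shiftn j z \<in> \<Omega>" if "z \<in> \<Omega>" for z j
      using shiftn_closed[OF inv that] .
    have sep_R: "separated 3 (visits ?R z)" if "z \<in> \<Omega>" for z
      by (rule separated_mono[OF separated_at_letter[OF dist that, of _ 1 b]])
        (auto simp: visits_cyl_pair)
    have sep_S: "separated 3 (visits ?S z)" if "z \<in> \<Omega>" for z
      by (rule separated_mono[OF separated_at_letter[OF dist that, of _ "-1" b]])
        (auto simp: visits_cyl)
    define A B where "A = visits ?R y" and "B = visits ?S y"
    have "separated 5 (\<lambda>j. A j \<or> B (j + 2))"
      by (rule separated_at_letter[OF dist True, of _ 1 b])
        (auto simp: A_def B_def visits_cyl_pair visits_cyl add.commute)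
    note commutator = block_rot_commutator[OF this, of 0]
    have visits_Cons: "visits (cyl \<Omega> [a] (b # v)) y = (\<lambda>j. A (j - 1) \<and> B (j + 1))"
      by (rule ext) (auto simp: A_def B_def visits_cyl_pair visits_cyl in_\<Omega>[OF True]
          less_Suc_eq_0_disj algebra_simps)
    have "gstar \<Omega> (sigma ?R) (sigma ?S) y
        = sigma ?S (sigma ?R (sigma ?R (sigma ?S (sigma ?S (sigma ?R y)))))"
      using True sep_R sep_S
      by (simp add: gstar_def inv_into_sigma[OF inv] sigma_closed[OF inv])
    also have "\<dots> = shiftn (block_rot (\<lambda>j. A (j - 1) \<and> B (j + 1)) 0) y"
      using sigma_shiftn[of _ 0 y] commutator by (simp add: sigma_shiftn A_def B_def)
    also have "\<dots> = sigma (cyl \<Omega> [a] (b # v)) y"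
      using sigma_shiftn[of _ 0 y] visits_Cons by simp
    finally show ?thesis .
  qed
qed

lemma nested_comm_eq_sigma:
  assumes inv: "shift ` \<Omega> = \<Omega>" and dist: "\<forall>u\<in>lang \<Omega>. length u = 5 \<longrightarrow> distinct u"
    and len: "3 \<le> length w"
  shows "nested_comm \<Omega> w = sigma (cyl \<Omega> [w ! 0] (drop 1 w))"
proof -
  define n where "n = length w"
  define G where "G = (\<lambda>i acc. gstar \<Omega> (sigma (cyl \<Omega> [] [w ! i, w ! (i + 1)])) acc)"
  define innermost where "innermost = sigma (cyl \<Omega> [w ! (n - 3)] [w ! (n - 2), w ! (n - 1)])"
  have "foldr G [j..<n - 3] innermost = sigma (cyl \<Omega> [w ! j] (drop (j + 1) w))" if "j \<le> n - 3" for j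
    using that
  proof (induction rule: inc_induct)
    case base
    have "3 \<le> n" using len by (simp add: n_def)
    then have "Suc (n - 2) = n - 1" and "n - 3 + 1 = n - 2" by arith+
    have "drop (n - 2) w = w ! (n - 2) # drop (Suc (n - 2)) w"
      using Cons_nth_drop_Suc[of "n - 2" w] \<open>3 \<le> n\<close> by (simp add: n_def)
    also have "drop (Suc (n - 2)) w = [w ! (n - 1)]"
      unfolding \<open>Suc (n - 2) = n - 1\<close>
      using Cons_nth_drop_Suc[of "n - 1" w] \<open>3 \<le> n\<close> by (simp add: n_def)
    finally show ?case using \<open>n - 3 + 1 = n - 2\<close> by (simp add: innermost_def)
  next
    case (step j)
    then have "drop (j + 1) w = w ! (j + 1) # drop (j + 2) w"
      by (simp add: n_def Cons_nth_drop_Suc)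
    with step.IH show ?case
      using step.hyps by (simp add: upt_conv_Cons G_def gstar_sigma_cyl[OF inv dist])
  qed
  from this[of 0] show ?thesis
    by (simp add: nested_comm_def Let_def G_def innermost_def n_def)
qed

lemma sigma_nontrivial_iff:
  assumes "U \<subseteq> \<Omega>" and "\<forall>x\<in>\<Omega>. shift x \<noteq> x"
  shows "(\<exists>x\<in>\<Omega>. sigma U x \<noteq> x) \<longleftrightarrow> U \<noteq> {}"
proof
  assume "\<exists>x\<in>\<Omega>. sigma U x \<noteq> x"
  then show "U \<noteq> {}" by (auto simp: sigma_def)
next
  assume "U \<noteq> {}"
  then obtain x where "x \<in> U" by blast
  then have "sigma U x = shift x" by (simp add: sigma_def)
  then show "\<exists>x\<in>\<Omega>. sigma U x \<noteq> x" using \<open>x \<in> U\<close> assms by (metis subsetD)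
qed

lemma lang_iff_cyl_nonempty:
  assumes inv: "shift ` \<Omega> = \<Omega>" and "w \<noteq> []"
  shows "w \<in> lang \<Omega> \<longleftrightarrow> cyl \<Omega> [w ! 0] (drop 1 w) \<noteq> {}"
proof -
  obtain c v where w: "w = c # v" using \<open>w \<noteq> []\<close> by (cases w) auto
  have mem: "y \<in> cyl \<Omega> [w ! 0] (drop 1 w) \<longleftrightarrow> y \<in> \<Omega> \<and> (\<forall>i<length w. y (int i - 1) = w ! i)" for y
    using visits_cyl[of \<Omega> c v y 0] by (simp add: w visits_def All_less_Suc2 algebra_simps)
  show ?thesis
  proof
    assume "w \<in> lang \<Omega>"
    then obtain x k where "x \<in> \<Omega>" and x: "\<forall>i<length w. x (k + int i) = w ! i"
      unfolding lang_def by blast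
    have "shiftn (k + 1) x \<in> \<Omega>" using shiftn_closed[OF inv \<open>x \<in> \<Omega>\<close>] .
    moreover have "\<forall>i<length w. shiftn (k + 1) x (int i - 1) = w ! i"
      using x by (simp add: shiftn_def algebra_simps)
    ultimately have "shiftn (k + 1) x \<in> cyl \<Omega> [w ! 0] (drop 1 w)" unfolding mem by blast
    then show "cyl \<Omega> [w ! 0] (drop 1 w) \<noteq> {}" by blast
  next
    assume "cyl \<Omega> [w ! 0] (drop 1 w) \<noteq> {}"
    then obtain y where "y \<in> cyl \<Omega> [w ! 0] (drop 1 w)" by blast
    then have "y \<in> \<Omega>" "\<forall>i<length w. y (- 1 + int i) = w ! i"
      unfolding mem by (simp_all add: algebra_simps)
    then show "w \<in> lang \<Omega>" unfolding lang_def by blast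
  qed
qed

theorem corollary3p7:
  fixes \<Omega> :: "(int \<Rightarrow> 'a::finite) set" and w :: "'a list"
  assumes "minimal_subshift \<Omega>"
    and "\<forall>u\<in>lang \<Omega>. length u = 5 \<longrightarrow> distinct u"
    and "length w \<ge> 4"
  shows "w \<in> lang \<Omega> \<longleftrightarrow> (\<exists>\<omega>\<in>\<Omega>. nested_comm \<Omega> w \<omega> \<noteq> \<omega>)"
proof -
  have inv: "shift ` \<Omega> = \<Omega>" using assms(1) by (simp add: minimal_subshift_def)
  let ?V = "cyl \<Omega> [w ! 0] (drop 1 w)"
  have "nested_comm \<Omega> w = sigma ?V"
    using nested_comm_eq_sigma[OF inv assms(2)] assms(3) by simp
  moreover have "(\<exists>\<omega>\<in>\<Omega>. sigma ?V \<omega> \<noteq> \<omega>) \<longleftrightarrow> ?V \<noteq> {}"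
    by (rule sigma_nontrivial_iff) (auto simp: cyl_def shift_no_fixpoint[OF assms(2)])
  moreover have "w \<in> lang \<Omega> \<longleftrightarrow> ?V \<noteq> {}"
    using assms(3) by (intro lang_iff_cyl_nonempty[OF inv]) auto
  ultimately show ?thesis by simp
qed

end
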